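(* Let $\ell\geq 1$ be an integer, let $\xi\in\mathbb{R}$, $h\in\mathbb{R}\setminus\{0\}$, and let $x_i=\xi+ih$ for $i=0,1,\ldots,\ell$. Let $\mathbf{a}=(a_0,\ldots,a_\ell)\in\mathbb{R}^{\ell+1}$ and let $q_{\mathbf{a}}$ be the unique real polynomial of degree at most $\ell$ with $q_{\mathbf{a}}(x_i)=a_i$ for $i=0,\ldots,\ell$. For an integer $s\geq 0$ let $A_{s,\mathbf{a}}\in M_{\ell+1}(\mathbb{R})$ be the matrix with entries \[ (A_{s,\mathbf{a}})_{ij}=\big((i-1)(\ell+1)+j\big)^{\ell-1}\quad (1\leq i\leq \ell,\ 1\leq j\leq \ell+1),\qquad (A_{s,\mathbf{a}})_{\ell+1,j}=(j-1)^s a_{j-1}\quad (1\leq j\leq \ell+1), \] i.e. \[ A_{s,\mathbf{a}}=\begin{pmatrix} 1^{\ell-1} & 2^{\ell-1}&\cdots& (\ell+1)^{\ell-1}\\ (\ell+2)^{\ell-1} & (\ell+3)^{\ell-1}&\cdots& (2\ell+2)^{\ell-1}\\ \vdots &\vdots &&\vdots \\ (\ell^{2})^{\ell-1} & (\ell^{2}+1)^{\ell-1} &\cdots& (\ell^2+\ell)^{\ell-1}\\ 0^sa_0 &1^sa_1&\cdots &\ell^sa_\ell \end{pmatrix}. \] Then for an integer $m$ with $0\leq m\leq \ell$, the polynomial $q_{\mathbf{a}}$ has degree exactly $\ell-m$ if and only if $\det A_{s,\mathbf{a}}=0$ for $s=0,\ldots,m-1$ and $\det A_{m,\mathbf{a}}\neq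 0$.
   Context: The convention $0^0=1$ is used in the last row of $A_{s,\mathbf{a}}$. *)

theory Defs
  imports "Jordan_Normal_Form.Determinant" "HOL-Computational_Algebra.Polynomial"
begin

text \<open>The (l+1)x(l+1) matrix A_{s,a}, 0-indexed: rows 0..l-1 have entries
  ((i)(l+1)+j+1)^(l-1); the last row (index l) has entries j^s * a j (with 0^0 = 1).\<close>
definition A_mat :: "nat \<Rightarrow> nat \<Rightarrow> (nat \<Rightarrow> real) \<Rightarrow> real mat" where
  "A_mat l s a = mat (l+1) (l+1) (\<lambda>(i,j).
      if i < l then real (i*(l+1) + j + 1) ^ (l - 1)
      else real j ^ s * a j)"

end

theory Submission imports Defs begin

text \<open>Put \<open>Q(x) = q(\<xi> + h x)\<close>, so that \<open>Q(j) = a\<^sub>j\<close> and \<open>deg Q = deg q\<close>. Row \<open>i < l\<close> of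
  \<open>A\<^sub>s\<close> lists the values at \<open>0, \<dots>, l\<close> of \<open>(x + i(l+1) + 1)^(l-1)\<close>, and the last row lists
  those of \<open>x\<^sup>s Q\<close>. A matrix of values factors as (matrix of coefficients) times
  (Vandermonde matrix); since the first \<open>l\<close> polynomials have degree \<open>< l\<close>, the coefficient
  matrix has a single nonzero entry, the coefficient of \<open>x\<^sup>l\<close> in \<open>x\<^sup>s Q\<close>, in its last column.
  Hence \<open>det A\<^sub>s = c * coeff Q (l - s)\<close> for a constant \<open>c \<noteq> 0\<close> (a product of generalized
  Vandermonde determinants), as long as \<open>s + deg Q \<le> l\<close>, and the vanishing pattern of
  \<open>det A\<^sub>0, det A\<^sub>1, \<dots>\<close> reads off the top coefficients of \<open>Q\<close>.\<close>

lemma det_generalized_vandermonde_neq_0: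
  fixes x w :: "nat \<Rightarrow> 'a :: idom" and e :: "nat \<Rightarrow> nat"
  assumes inj: "inj_on x {..<n}" and e_inj: "inj_on e {..<n}"
    and e_less: "\<And>k. k < n \<Longrightarrow> e k < n" and w: "\<And>k. k < n \<Longrightarrow> w k \<noteq> 0"
  shows "det (mat n n (\<lambda>(i,k). w k * x i ^ e k)) \<noteq> 0"
proof
  let ?V = "mat n n (\<lambda>(i,k). w k * x i ^ e k)"
  assume "det ?V = 0"
  then obtain v where v: "v \<in> carrier_vec n" "v \<noteq> 0\<^sub>v n" "?V *\<^sub>v v = 0\<^sub>v n"
    using det_0_iff_vec_prod_zero[of ?V n] by auto
  have "n > 0"
    using v(1,2) by (cases "n = 0") auto
  define P where "P = (\<Sum>k<n. monom (w k * v $ k) (e k))"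
  have roots: "poly P (x i) = poly 0 (x i)" if "i < n" for i
  proof -
    have "(\<Sum>k\<in>{0..<n}. w k * x i ^ e k * v $ k) = (?V *\<^sub>v v) $ i"
      using that v(1) by (simp add: scalar_prod_def row_def)
    also have "\<dots> = 0" using v(3) that by simp
    finally show ?thesis
      by (simp add: P_def poly_sum poly_monom lessThan_atLeast0 mult_ac)
  qed
  have "degree P < n"
    unfolding P_def using e_less \<open>n > 0\<close>
    by (intro degree_sum_less) (auto intro: le_less_trans[OF degree_monom_le])
  moreover have "card (x ` {..<n}) = n" using inj by (simp add: card_image)
  ultimately have "P = 0"
    using roots by (intro poly_eqI_degree[of "x ` {..<n}"]) auto
  have "v = 0\<^sub>v n"
  proof (rule eq_vecI)
    fix k assume "k < dim_vec (0\<^sub>v n :: 'a vec)"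
    hence k: "k < n" by simp
    have "coeff P (e k) = (\<Sum>j<n. if e j = e k then w j * v $ j else 0)"
      by (simp add: P_def coeff_sum)
    also have "\<dots> = (\<Sum>j\<in>{k}. w j * v $ j)"
      using k e_inj by (intro sum.mono_neutral_cong_right) (auto simp: inj_on_def)
    finally have "w k * v $ k = 0" using \<open>P = 0\<close> by simp
    thus "v $ k = 0\<^sub>v n $ k" using w[OF k] k by simp
  qed (use v in auto)
  with v(2) show False by simp
qed

definition coeff_mat :: "nat \<Rightarrow> (nat \<Rightarrow> 'a :: zero poly) \<Rightarrow> 'a mat" where
  "coeff_mat n p = mat n n (\<lambda>(i,k). coeff (p i) k)"

definition vandermonde_mat :: "nat \<Rightarrow> (nat \<Rightarrow> 'a :: semiring_1) \<Rightarrow> 'a mat" where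
  "vandermonde_mat n x = mat n n (\<lambda>(k,j). x j ^ k)"

lemma det_vandermonde_mat_neq_0:
  fixes x :: "nat \<Rightarrow> 'a :: idom"
  assumes "inj_on x {..<n}"
  shows "det (vandermonde_mat n x) \<noteq> 0"
proof -
  have "det (mat n n (\<lambda>(i,k). 1 * x i ^ id k)) \<noteq> 0"
    using assms by (intro det_generalized_vandermonde_neq_0) auto
  moreover have "vandermonde_mat n x = transpose_mat (mat n n (\<lambda>(i,k). 1 * x i ^ id k))"
    by (rule eq_matI) (auto simp: vandermonde_mat_def)
  ultimately show ?thesis by (metis det_transpose mat_carrier)
qed

lemma det_coeff_mat_linear_powers_neq_0:
  fixes c :: "nat \<Rightarrow> 'a :: {idom, ring_char_0}"
  assumes "inj_on c {..<n}"
  shows "det (coeff_mat n (\<lambda>i. [:c i, 1:] ^ (n - 1))) \<noteq> 0"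
proof -
  have "det (mat n n (\<lambda>(i,k). of_nat (n - 1 choose k) * c i ^ (n - 1 - k))) \<noteq> 0"
    using assms by (intro det_generalized_vandermonde_neq_0) (auto simp: inj_on_def)
  moreover have "coeff_mat n (\<lambda>i. [:c i, 1:] ^ (n - 1))
      = mat n n (\<lambda>(i,k). of_nat (n - 1 choose k) * c i ^ (n - 1 - k))"
    by (rule eq_matI) (auto simp: coeff_mat_def coeff_linear_poly_power)
  ultimately show ?thesis by simp
qed

lemma poly_eq_sum_coeff:
  fixes p :: "'a :: comm_semiring_1 poly"
  assumes "degree p < n"
  shows "poly p x = (\<Sum>k<n. coeff p k * x ^ k)"
proof -
  have "poly p x = (\<Sum>k\<le>degree p. coeff p k * x ^ k)" by (rule poly_altdef)
  also have "\<dots> = (\<Sum>k<n. coeff p k * x ^ k)"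
    using assms by (intro sum.mono_neutral_left) (auto simp: coeff_eq_0)
  finally show ?thesis .
qed

lemma coeff_mat_mult_vandermonde_mat:
  fixes p :: "nat \<Rightarrow> 'a :: comm_semiring_1 poly"
  assumes "\<And>i. i < n \<Longrightarrow> degree (p i) < n"
  shows "coeff_mat n p * vandermonde_mat n x = mat n n (\<lambda>(i,j). poly (p i) (x j))"
proof (rule eq_matI)
  fix i j assume "i < dim_row (mat n n (\<lambda>(i,j). poly (p i) (x j)))"
    and "j < dim_col (mat n n (\<lambda>(i,j). poly (p i) (x j)))"
  hence ij: "i < n" "j < n" by auto
  have "(coeff_mat n p * vandermonde_mat n x) $$ (i,j) = (\<Sum>k<n. coeff (p i) k * x j ^ k)"
    using ij by (simp add: coeff_mat_def vandermonde_mat_def scalar_prod_def lessThan_atLeast0)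
  also have "\<dots> = poly (p i) (x j)" using assms[OF ij(1)] by (rule poly_eq_sum_coeff[symmetric])
  finally show "(coeff_mat n p * vandermonde_mat n x) $$ (i,j) = mat n n (\<lambda>(i,j). poly (p i) (x j)) $$ (i,j)"
    using ij by simp
qed (auto simp: coeff_mat_def vandermonde_mat_def)

lemma det_coeff_mat_Suc:
  fixes p :: "nat \<Rightarrow> 'a :: comm_ring_1 poly"
  assumes "\<And>i. i < n \<Longrightarrow> degree (p i) < n"
  shows "det (coeff_mat (Suc n) p) = coeff (p n) n * det (coeff_mat n p)"
proof -
  let ?C = "coeff_mat (Suc n) p"
  have "det ?C = (\<Sum>i<Suc n. ?C $$ (i,n) * cofactor ?C i n)"
    by (intro laplace_expansion_column) (auto simp: coeff_mat_def)
  also have "\<dots> = ?C $$ (n,n) * cofactor ?C n n"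
    using assms by (simp add: coeff_mat_def coeff_eq_0)
  also have "mat_delete ?C n n = coeff_mat n p"
    by (rule eq_matI) (auto simp: coeff_mat_def mat_delete_def)
  hence "cofactor ?C n n = det (coeff_mat n p)"
    by (simp add: cofactor_def)
  finally show ?thesis by (simp add: coeff_mat_def)
qed

definition shifted_power :: "nat \<Rightarrow> nat \<Rightarrow> real poly" where
  "shifted_power l i = [:real (i * (l + 1) + 1), 1:] ^ (l - 1)"

definition A_row_poly :: "nat \<Rightarrow> nat \<Rightarrow> real poly \<Rightarrow> nat \<Rightarrow> real poly" where
  "A_row_poly l s Q i = (if i < l then shifted_power l i else monom 1 s * Q)"

lemma A_mat_eq_poly_values:
  assumes "\<And>j. j \<le> l \<Longrightarrow> poly Q (real j) = a j"
  shows "A_mat l s a = mat (l + 1) (l + 1) (\<lambda>(i,j). poly (A_row_poly l s Q i) (real j))"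
  using assms
  by (intro eq_matI) (auto simp: A_mat_def A_row_poly_def shifted_power_def poly_monom algebra_simps)

lemma degree_A_row_poly_less:
  assumes "s + degree Q \<le> l" "i < l + 1"
  shows "degree (A_row_poly l s Q i) < l + 1"
proof (cases "i < l")
  case True
  thus ?thesis by (simp add: A_row_poly_def shifted_power_def degree_linear_power)
next
  case False
  have "degree (monom (1 :: real) s * Q) \<le> s + degree Q"
    using degree_mult_le[of "monom 1 s" Q] degree_monom_le[of "1 :: real" s] by linarith
  with False assms(1) show ?thesis by (simp add: A_row_poly_def)
qed

definition A_det_factor :: "nat \<Rightarrow> real" where
  "A_det_factor l = det (coeff_mat l (shifted_power l)) * det (vandermonde_mat (l + 1) real)"

lemma A_det_factor_neq_0: "A_det_factor l \<noteq> 0"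
proof -
  have "inj_on (\<lambda>i. real (i * (l + 1) + 1)) {..<l}"
    unfolding inj_on_def of_nat_eq_iff add_right_cancel mult_cancel2 by simp
  then show ?thesis
    unfolding A_det_factor_def shifted_power_def
    by (intro no_zero_divisors det_coeff_mat_linear_powers_neq_0 det_vandermonde_mat_neq_0)
       (auto simp: inj_on_def)
qed

lemma det_A_mat_eq:
  assumes deg: "s + degree Q \<le> l" and nodes: "\<And>j. j \<le> l \<Longrightarrow> poly Q (real j) = a j"
  shows "det (A_mat l s a) = A_det_factor l * coeff Q (l - s)"
proof -
  let ?V = "vandermonde_mat (l + 1) real" and ?p = "A_row_poly l s Q"
  have deg_rows: "\<And>i. i < l + 1 \<Longrightarrow> degree (?p i) < l + 1"
    using deg by (rule degree_A_row_poly_less)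
  have "det (A_mat l s a) = det (coeff_mat (l + 1) ?p * ?V)"
    using A_mat_eq_poly_values[OF nodes] coeff_mat_mult_vandermonde_mat[OF deg_rows] by simp
  also have "\<dots> = det (coeff_mat (l + 1) ?p) * det ?V"
    by (rule det_mult[of _ "l + 1"]) (auto simp: coeff_mat_def vandermonde_mat_def)
  also have "det (coeff_mat (l + 1) ?p) = coeff (?p l) l * det (coeff_mat l ?p)"
    by (rule det_coeff_mat_Suc[unfolded Suc_eq_plus1])
       (simp add: A_row_poly_def shifted_power_def degree_linear_power)
  also have "coeff_mat l ?p = coeff_mat l (shifted_power l)"
    by (rule eq_matI) (auto simp: coeff_mat_def A_row_poly_def)
  also have "coeff (?p l) l = coeff Q (l - s)"
    using deg by (simp add: A_row_poly_def coeff_monom_mult)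
  finally show ?thesis by (simp add: A_det_factor_def)
qed

lemma degree_eq_iff_top_coeffs_vanish:
  fixes Q :: "'a :: zero poly"
  assumes "degree Q \<le> l" and "m \<le> l"
    and vanishes: "\<And>s. s + degree Q \<le> l \<Longrightarrow> D s \<longleftrightarrow> coeff Q (l - s) = 0"
  shows "(Q \<noteq> 0 \<and> degree Q = l - m) \<longleftrightarrow> (\<forall>s<m. D s) \<and> \<not> D m"
proof
  assume Q: "Q \<noteq> 0 \<and> degree Q = l - m"
  hence "coeff Q (l - m) \<noteq> 0" by (metis leading_coeff_0_iff)
  with Q assms show "(\<forall>s<m. D s) \<and> \<not> D m"
    by (auto intro: coeff_eq_0)
next
  assume D: "(\<forall>s<m. D s) \<and> \<not> D m"
  show "Q \<noteq> 0 \<and> degree Q = l - m"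
  proof (cases "degree Q \<le> l - m")
    case True
    hence "coeff Q (l - m) \<noteq> 0" using D vanishes[of m] assms(2) by auto
    with True show ?thesis using le_degree by fastforce
  next
    case False
    hence "D (l - degree Q)" using D assms(1,2) by auto
    hence "lead_coeff Q = 0" using vanishes[of "l - degree Q"] assms(1) by simp
    with False show ?thesis by simp
  qed
qed

theorem theorem1:
  fixes l m :: nat and \<xi> h :: real and a :: "nat \<Rightarrow> real" and q :: "real poly"
  assumes "l \<ge> 1" and "h \<noteq> 0"
    and "degree q \<le> l"
    and "\<And>i. i \<le> l \<Longrightarrow> poly q (\<xi> + real i * h) = a i"
    and "m \<le> l"
  shows "(q \<noteq> 0 \<and> degree q = l - m) \<longleftrightarrow>
         ((\<forall>s<m. det (A_mat l s a) = 0) \<and> det (A_mat l m a) \<noteq> 0)"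
proof -
  define Q where "Q = pcompose q [:\<xi>, h:]"
  have "degree Q = degree q" using \<open>h \<noteq> 0\<close> by (simp add: Q_def degree_pcompose)
  have "Q = 0 \<longleftrightarrow> q = 0" using \<open>h \<noteq> 0\<close> by (simp add: Q_def pcompose_eq_0_iff)
  have nodes: "\<And>j. j \<le> l \<Longrightarrow> poly Q (real j) = a j"
    using assms(4) by (simp add: Q_def poly_pcompose mult.commute)
  have "\<And>s. s + degree Q \<le> l \<Longrightarrow> det (A_mat l s a) = 0 \<longleftrightarrow> coeff Q (l - s) = 0"
    using det_A_mat_eq[OF _ nodes] A_det_factor_neq_0 by simp
  from degree_eq_iff_top_coeffs_vanish[OF _ \<open>m \<le> l\<close> this]
  show ?thesis using \<open>degree Q = degree q\<close> \<open>Q = 0 \<longleftrightarrow> q = 0\<close> \<open>degree q \<le> l\<close> by simp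
qed

end
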